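(* Fix $\Theta\in\Omega$ and let $\mu$ be as in the setup. Almost surely $\mu[0,l]\sim\mathbb E[\mu[0,l]]$ as $l\to\infty$.
   Context: Let $\Omega$ be the set of sequences $\Theta=(\theta_i)_{i\ge 0}$ of nonnegative reals with $\sum_{i\ge0}\theta_i^2=1$, $\theta_1\ge\theta_2\ge\cdots$, and either $\theta_0\ne0$ or $\sum_{i\ge1}\theta_i=\infty$. For $\Theta\in\Omega$, let $(X_i)_{i\ge1}$ be independent exponential random variables with respective rates $\theta_i$ (a rate-$0$ variable equals $+\infty$), and let $\mu:=\theta_0^2\,dx+\sum_{i\ge1}\theta_i\delta_{X_i}$, a random measure on $\mathbb R^+$. *)

theory Defs
  imports "HOL-Probability.Probability" "HOL-Library.Landau_Symbols"
begin

definition in_Omega :: "(nat \<Rightarrow> real) \<Rightarrow> bool" where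
  "in_Omega \<theta> \<longleftrightarrow> (\<forall>i. 0 \<le> \<theta> i) \<and> ((\<lambda>i. (\<theta> i)\<^sup>2) sums 1)
     \<and> (\<forall>i\<ge>1. \<theta> (Suc i) \<le> \<theta> i)
     \<and> (\<theta> 0 \<noteq> 0 \<or> \<not> summable (\<lambda>i. \<theta> (Suc i)))"

definition rand_mu :: "(nat \<Rightarrow> real) \<Rightarrow> (nat \<Rightarrow> 'a \<Rightarrow> real) \<Rightarrow> 'a \<Rightarrow> real set \<Rightarrow> ennreal" where
  "rand_mu \<theta> X w A = ennreal ((\<theta> 0)\<^sup>2) * emeasure lborel (A \<inter> {0..})
      + (\<Sum>i. ennreal (\<theta> (Suc i)) * indicator A (X (Suc i) w))"

end

theory Submission
  imports Defs "HOL-Real_Asymp.Real_Asymp"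
begin

(*
  Write m l for the mean measure E mu[0,l] = theta_0^2 l + sum_i theta_i (1 - exp (- theta_i l)).
  It is continuous, increasing, 1-Lipschitz and tends to infinity (this is where the condition
  theta_0 <> 0 or sum theta_i = infinity enters).  Since the atoms are independent, the variance
  of mu[0,l] is at most sum theta_i^2 <= 1 uniformly in l.  Choosing levels l_n with m l_n = n^2,
  Chebyshev gives P(|mu[0,l_n] - n^2| >= n) <= 1/n^2, so by Borel-Cantelli almost surely
  mu[0,l_n] / n^2 -> 1.  As l -> mu[0,l] is monotone and (n+1)^2 / n^2 -> 1, the ratio
  mu[0,l] / m l is squeezed between consecutive levels and tends to 1.
*)

section \<open>Interpolation between square levels\<close>

lemma filterlim_nat_floor_sqrt:
  fixes m :: "'b \<Rightarrow> real"
  assumes "filterlim m at_top F"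
  shows "filterlim (\<lambda>x. nat \<lfloor>sqrt (m x)\<rfloor>) sequentially F"
proof -
  have "filterlim (\<lambda>x. \<lfloor>sqrt (m x)\<rfloor>) at_top F"
    using filterlim_compose[OF filterlim_floor_sequentially filterlim_compose[OF sqrt_at_top assms]] .
  then show ?thesis
    by (rule filterlim_compose[OF filterlim_nat_sequentially])
qed

lemma tendsto_shifted_div_square:
  fixes a :: "nat \<Rightarrow> real"
  assumes a: "(\<lambda>n. a n / (real n)\<^sup>2) \<longlonglongrightarrow> 1"
  shows "(\<lambda>j. a (j - 1) / (real j + 1)\<^sup>2) \<longlonglongrightarrow> 1"
    and "(\<lambda>j. a (j + 1) / (real j)\<^sup>2) \<longlonglongrightarrow> 1"
proof -
  have "filterlim (\<lambda>j::nat. j - 1) sequentially sequentially"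
    by (simp add: filterlim_sequentially_Suc[symmetric] filterlim_ident)
  then have "(\<lambda>j. a (j - 1) / (real (j - 1))\<^sup>2) \<longlonglongrightarrow> 1"
    by (rule filterlim_compose[OF a])
  moreover have "(\<lambda>j. ((real j - 1) / (real j + 1))\<^sup>2) \<longlonglongrightarrow> 1"
    by real_asymp
  ultimately have "(\<lambda>j. a (j - 1) / (real (j - 1))\<^sup>2 * ((real j - 1) / (real j + 1))\<^sup>2) \<longlonglongrightarrow> 1 * 1"
    by (rule tendsto_mult)
  moreover have "eventually (\<lambda>j. a (j - 1) / (real (j - 1))\<^sup>2 * ((real j - 1) / (real j + 1))\<^sup>2
      = a (j - 1) / (real j + 1)\<^sup>2) sequentially"
    using eventually_ge_at_top[of 2] by eventually_elim (simp add: power_divide)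
  ultimately show "(\<lambda>j. a (j - 1) / (real j + 1)\<^sup>2) \<longlonglongrightarrow> 1"
    by (simp add: tendsto_cong)
  have "(\<lambda>j. a (j + 1) / (real (j + 1))\<^sup>2 * ((real j + 1) / real j)\<^sup>2) \<longlonglongrightarrow> 1 * 1"
    by (intro tendsto_mult LIMSEQ_Suc[OF a, unfolded Suc_eq_plus1]) real_asymp
  moreover have "eventually (\<lambda>j. a (j + 1) / (real (j + 1))\<^sup>2 * ((real j + 1) / real j)\<^sup>2
      = a (j + 1) / (real j)\<^sup>2) sequentially"
    using eventually_ge_at_top[of 1] by eventually_elim (simp add: power_divide add.commute)
  ultimately show "(\<lambda>j. a (j + 1) / (real j)\<^sup>2) \<longlonglongrightarrow> 1"
    by (simp add: tendsto_cong)
qed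

lemma square_levels_bracket:
  fixes m :: "real \<Rightarrow> real" and L :: "nat \<Rightarrow> real"
  assumes m_mono: "mono_on {0..} m"
    and L_nonneg: "\<And>n. 0 \<le> L n" and m_L: "\<And>n. m (L n) = (real n)\<^sup>2"
    and l: "0 \<le> l" and j: "j = nat \<lfloor>sqrt (m l)\<rfloor>" "2 \<le> j"
  shows "(real j)\<^sup>2 \<le> m l" "m l < (real j + 1)\<^sup>2" "L (j - 1) \<le> l" "l \<le> L (j + 1)"
proof -
  have j_le: "real j \<le> sqrt (m l)" and j_gt: "sqrt (m l) < real j + 1"
    using j by linarith+
  have m_nonneg: "0 \<le> m l"
    using j_le j by (metis of_nat_0_le_iff order.trans real_sqrt_ge_0_iff)
  show m_lower: "(real j)\<^sup>2 \<le> m l"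
    using power_mono[OF j_le, of 2] m_nonneg by simp
  show m_upper: "m l < (real j + 1)\<^sup>2"
    using power_strict_mono[OF j_gt, of 2] m_nonneg by simp
  show "L (j - 1) \<le> l"
  proof (rule ccontr)
    assume "\<not> L (j - 1) \<le> l"
    then have "m l \<le> m (L (j - 1))"
      using l L_nonneg by (intro mono_onD[OF m_mono]) auto
    also have "\<dots> = (real j - 1)\<^sup>2" using m_L j by simp
    also have "\<dots> < (real j)\<^sup>2" using j by (simp add: power2_eq_square algebra_simps)
    finally show False using m_lower by simp
  qed
  show "l \<le> L (j + 1)"
  proof (rule ccontr)
    assume "\<not> l \<le> L (j + 1)"
    then have "m (L (j + 1)) \<le> m l"
      using l L_nonneg by (intro mono_onD[OF m_mono]) auto
    then show False using m_L[of "j + 1"] m_upper by (simp add: add.commute)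
  qed
qed

lemma asymp_equiv_of_square_levels:
  fixes f m :: "real \<Rightarrow> real" and L :: "nat \<Rightarrow> real"
  assumes f_mono: "mono f" and f_nonneg: "\<And>x. 0 \<le> f x"
    and m_mono: "mono_on {0..} m" and m_lim: "filterlim m at_top at_top"
    and L_nonneg: "\<And>n. 0 \<le> L n" and m_L: "\<And>n. m (L n) = (real n)\<^sup>2"
    and ratio: "(\<lambda>n. f (L n) / (real n)\<^sup>2) \<longlonglongrightarrow> 1"
  shows "f \<sim>[at_top] m"
proof -
  define k where "k l = nat \<lfloor>sqrt (m l)\<rfloor>" for l
  have k_lim: "filterlim k sequentially at_top"
    unfolding k_def using m_lim by (rule filterlim_nat_floor_sqrt)
  have bracket: "eventually (\<lambda>l. f (L (k l - 1)) / (real (k l) + 1)\<^sup>2 \<le> f l / m l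
      \<and> f l / m l \<le> f (L (k l + 1)) / (real (k l))\<^sup>2) at_top"
    using eventually_ge_at_top[of 0]
      filterlim_iff[THEN iffD1, OF k_lim, rule_format, OF eventually_ge_at_top[of 2]]
  proof eventually_elim
    case (elim l)
    note bounds = square_levels_bracket[OF m_mono L_nonneg m_L elim(1) k_def elim(2)]
    have m_pos: "0 < m l"
      using bounds(1) elim(2)
      by (metis of_nat_0_less_iff zero_less_numeral order.strict_trans2 zero_less_power)
    have "f (L (k l - 1)) / (real (k l) + 1)\<^sup>2 \<le> f l / m l"
      using monoD[OF f_mono bounds(3)] bounds(2) m_pos f_nonneg
      by (meson frac_le less_imp_le order.trans)
    moreover have "f l / m l \<le> f (L (k l + 1)) / (real (k l))\<^sup>2"
      using monoD[OF f_mono bounds(4)] bounds(1) m_pos f_nonneg elim(2)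
      by (intro frac_le) auto
    ultimately show ?case ..
  qed
  have "((\<lambda>l. f l / m l) \<longlongrightarrow> 1) at_top"
  proof (rule tendsto_sandwich)
    show "eventually (\<lambda>l. f (L (k l - 1)) / (real (k l) + 1)\<^sup>2 \<le> f l / m l) at_top"
      using bracket by (rule eventually_mono) simp
    show "eventually (\<lambda>l. f l / m l \<le> f (L (k l + 1)) / (real (k l))\<^sup>2) at_top"
      using bracket by (rule eventually_mono) simp
    show "((\<lambda>l. f (L (k l - 1)) / (real (k l) + 1)\<^sup>2) \<longlongrightarrow> 1) at_top"
      using tendsto_shifted_div_square(1)[OF ratio] k_lim by (rule filterlim_compose)
    show "((\<lambda>l. f (L (k l + 1)) / (real (k l))\<^sup>2) \<longlongrightarrow> 1) at_top"
      using tendsto_shifted_div_square(2)[OF ratio] k_lim by (rule filterlim_compose)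
  qed
  then show ?thesis by (rule asymp_equivI')
qed

lemma tendsto_div_square_of_near:
  assumes "eventually (\<lambda>n. \<bar>a n - (real n)\<^sup>2\<bar> < real n) sequentially"
  shows "(\<lambda>n. a n / (real n)\<^sup>2) \<longlonglongrightarrow> 1"
proof -
  have "(\<lambda>n. a n / (real n)\<^sup>2 - 1) \<longlonglongrightarrow> 0"
  proof (rule Lim_null_comparison)
    show "(\<lambda>n. 1 / real n) \<longlonglongrightarrow> 0" by real_asymp
    show "eventually (\<lambda>n. norm (a n / (real n)\<^sup>2 - 1) \<le> 1 / real n) sequentially"
      using assms eventually_gt_at_top[of 0]
    proof eventually_elim
      case (elim n)
      then have "\<bar>a n / (real n)\<^sup>2 - 1\<bar> = \<bar>a n - (real n)\<^sup>2\<bar> / (real n)\<^sup>2"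
        by (simp add: field_simps abs_div)
      also have "\<dots> \<le> real n / (real n)\<^sup>2"
        using elim by (intro divide_right_mono) auto
      finally show ?case using elim by (simp add: power2_eq_square)
    qed
  qed
  then show ?thesis by (simp add: LIM_zero_iff)
qed

section \<open>The mean measure\<close>

definition exp_atom_mass :: "real \<Rightarrow> real \<Rightarrow> real" where
  "exp_atom_mass t x = t * (1 - exp (- t * x))"

lemma exp_atom_mass_0 [simp]: "exp_atom_mass t 0 = 0"
  by (simp add: exp_atom_mass_def)

lemma exp_atom_mass_increment:
  assumes t: "0 \<le> t" and a: "0 \<le> a" and ab: "a \<le> b"
  shows "0 \<le> exp_atom_mass t b - exp_atom_mass t a"
    and "exp_atom_mass t b - exp_atom_mass t a \<le> t\<^sup>2 * (b - a)"
proof -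
  have eq: "exp_atom_mass t b - exp_atom_mass t a = t * (exp (- t * a) * (1 - exp (- t * (b - a))))"
    by (simp add: exp_atom_mass_def algebra_simps flip: exp_add)
  have gap_nonneg: "0 \<le> 1 - exp (- t * (b - a))"
    using t ab by (simp add: mult_nonneg_nonneg)
  show "0 \<le> exp_atom_mass t b - exp_atom_mass t a"
    unfolding eq using t gap_nonneg by simp
  have gap_le: "1 - exp (- t * (b - a)) \<le> t * (b - a)"
    using exp_ge_add_one_self[of "- t * (b - a)"] by simp
  have "exp (- t * a) \<le> 1"
    using t a by (simp add: mult_nonneg_nonneg)
  then have "exp (- t * a) * (1 - exp (- t * (b - a))) \<le> 1 * (t * (b - a))"
    using gap_nonneg gap_le by (intro mult_mono) auto
  then show "exp_atom_mass t b - exp_atom_mass t a \<le> t\<^sup>2 * (b - a)"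
    unfolding eq using t by (simp add: power2_eq_square mult.assoc mult_left_mono)
qed

lemma exp_atom_mass_bounds:
  assumes "0 \<le> t" "0 \<le> x"
  shows "0 \<le> exp_atom_mass t x" "exp_atom_mass t x \<le> t\<^sup>2 * x"
  using exp_atom_mass_increment[OF assms(1) order_refl assms(2)] by simp_all

lemma tendsto_exp_atom_mass: "0 \<le> t \<Longrightarrow> (exp_atom_mass t \<longlongrightarrow> t) at_top"
proof (cases "t = 0")
  case False
  assume "0 \<le> t"
  with False have "((\<lambda>x. t * (1 - exp (- t * x))) \<longlongrightarrow> t * (1 - 0)) at_top"
    by (intro tendsto_intros) real_asymp
  then show ?thesis by (simp add: exp_atom_mass_def[abs_def])
qed (simp add: exp_atom_mass_def[abs_def])

lemma summable_exp_atom_mass: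
  assumes "\<And>i. 0 \<le> t i" "summable (\<lambda>i. (t i)\<^sup>2)" "0 \<le> x"
  shows "summable (\<lambda>i. exp_atom_mass (t i) x)"
  by (rule summable_comparison_test[where g="\<lambda>i. (t i)\<^sup>2 * x"])
    (use assms exp_atom_mass_bounds in \<open>auto intro: summable_mult2\<close>)

definition mean_mass :: "real \<Rightarrow> (nat \<Rightarrow> real) \<Rightarrow> real \<Rightarrow> real" where
  "mean_mass c t l = c * l + (\<Sum>i. exp_atom_mass (t i) l)"

lemma mean_mass_0 [simp]: "mean_mass c t 0 = 0"
  by (simp add: mean_mass_def)

lemma mean_mass_increment:
  assumes t: "\<And>i. 0 \<le> t i" and t2: "summable (\<lambda>i. (t i)\<^sup>2)" and c: "0 \<le> c"
    and a: "0 \<le> a" and ab: "a \<le> b"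
  shows "0 \<le> mean_mass c t b - mean_mass c t a"
    and "mean_mass c t b - mean_mass c t a \<le> (c + (\<Sum>i. (t i)\<^sup>2)) * (b - a)"
proof -
  have sa: "summable (\<lambda>i. exp_atom_mass (t i) a)" and sb: "summable (\<lambda>i. exp_atom_mass (t i) b)"
    using summable_exp_atom_mass[OF t t2] a ab by auto
  have diff: "mean_mass c t b - mean_mass c t a
      = c * (b - a) + (\<Sum>i. exp_atom_mass (t i) b - exp_atom_mass (t i) a)"
    unfolding mean_mass_def using suminf_diff[OF sb sa] by (simp add: algebra_simps)
  have sd: "summable (\<lambda>i. exp_atom_mass (t i) b - exp_atom_mass (t i) a)"
    by (rule summable_diff[OF sb sa])
  have "0 \<le> (\<Sum>i. exp_atom_mass (t i) b - exp_atom_mass (t i) a)"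
    using exp_atom_mass_increment(1)[OF t a ab] sd by (intro suminf_nonneg) auto
  then show "0 \<le> mean_mass c t b - mean_mass c t a"
    unfolding diff using c ab by simp
  have "(\<Sum>i. exp_atom_mass (t i) b - exp_atom_mass (t i) a) \<le> (\<Sum>i. (t i)\<^sup>2 * (b - a))"
    using exp_atom_mass_increment(2)[OF t a ab] sd t2 by (intro suminf_le summable_mult2) auto
  also have "\<dots> = (\<Sum>i. (t i)\<^sup>2) * (b - a)"
    using t2 by (rule suminf_mult2[symmetric])
  finally show "mean_mass c t b - mean_mass c t a \<le> (c + (\<Sum>i. (t i)\<^sup>2)) * (b - a)"
    unfolding diff by (simp add: algebra_simps)
qed

lemma continuous_on_mean_mass:
  assumes "\<And>i. 0 \<le> t i" "summable (\<lambda>i. (t i)\<^sup>2)" "0 \<le> c"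
  shows "continuous_on {0..} (mean_mass c t)"
proof (rule lipschitz_on_continuous_on)
  show "(c + (\<Sum>i. (t i)\<^sup>2))-lipschitz_on {0..} (mean_mass c t)"
  proof (rule lipschitz_onI)
    fix x y :: real assume "x \<in> {0..}" "y \<in> {0..}"
    then show "dist (mean_mass c t x) (mean_mass c t y) \<le> (c + (\<Sum>i. (t i)\<^sup>2)) * dist x y"
      using mean_mass_increment[OF assms, of x y] mean_mass_increment[OF assms, of y x]
      by (cases "x \<le> y") (auto simp: dist_real_def)
  next
    show "0 \<le> c + (\<Sum>i. (t i)\<^sup>2)"
      using assms by (simp add: suminf_nonneg)
  qed
qed

lemma filterlim_mean_mass_at_top:
  assumes t: "\<And>i. 0 \<le> t i" and t2: "summable (\<lambda>i. (t i)\<^sup>2)" and c: "0 \<le> c"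
    and unbounded: "c \<noteq> 0 \<or> \<not> summable t"
  shows "filterlim (mean_mass c t) at_top at_top"
  unfolding filterlim_at_top
proof
  fix Z :: real
  have atoms_nonneg: "0 \<le> (\<Sum>i. exp_atom_mass (t i) l)" if "0 \<le> l" for l
    using summable_exp_atom_mass[OF t t2 that] exp_atom_mass_bounds(1)[OF t that]
    by (intro suminf_nonneg) auto
  show "eventually (\<lambda>l. Z \<le> mean_mass c t l) at_top"
  proof (cases "c = 0")
    case False
    with c have c_pos: "0 < c" by simp
    show ?thesis
      using eventually_ge_at_top[of "max 0 (Z / c)"]
    proof eventually_elim
      case (elim l)
      then have "Z \<le> c * l" using c_pos by (simp add: field_simps)
      then show ?case using atoms_nonneg[of l] elim by (simp add: mean_mass_def)
    qed
  next
    case True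
    with unbounded have "\<not> summable t" by simp
    then obtain N where N: "Z < sum t {..<N}"
      using t summableI_nonneg_bounded[of t Z] by (meson not_le)
    have "((\<lambda>l. \<Sum>i<N. exp_atom_mass (t i) l) \<longlongrightarrow> (\<Sum>i<N. t i)) at_top"
      by (intro tendsto_sum tendsto_exp_atom_mass t)
    then have "eventually (\<lambda>l. Z < (\<Sum>i<N. exp_atom_mass (t i) l)) at_top"
      using N by (intro order_tendstoD) auto
    then show ?thesis using eventually_ge_at_top[of 0]
    proof eventually_elim
      case (elim l)
      have "(\<Sum>i<N. exp_atom_mass (t i) l) \<le> (\<Sum>i. exp_atom_mass (t i) l)"
        using summable_exp_atom_mass[OF t t2 elim(2)] exp_atom_mass_bounds(1)[OF t elim(2)]
        by (intro sum_le_suminf) auto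
      then show ?case using elim True by (simp add: mean_mass_def)
    qed
  qed
qed

lemma continuous_on_attains_at_top:
  fixes m :: "real \<Rightarrow> real"
  assumes "continuous_on {0..} m" "m 0 \<le> y" "filterlim m at_top at_top"
  shows "\<exists>x\<ge>0. m x = y"
proof -
  obtain b where b: "y \<le> m b" "0 \<le> b"
    using assms(3) eventually_ge_at_top[of 0]
    unfolding filterlim_at_top by (metis (mono_tags) eventually_conj eventually_happens' trivial_limit_at_top_linorder)
  have "\<exists>x. 0 \<le> x \<and> x \<le> b \<and> m x = y"
    using assms(1,2) b by (intro IVT') (auto elim: continuous_on_subset)
  then show ?thesis by blast
qed

section \<open>Deviation of series of independent indicators\<close>

lemma (in prob_space) indep_sets_reindex:
  assumes indep: "indep_sets F (f ` I)" and inj: "inj_on f I"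
  shows "indep_sets (\<lambda>i. F (f i)) I"
  unfolding indep_sets_def
proof (intro conjI ballI allI impI)
  fix i assume "i \<in> I"
  then show "F (f i) \<subseteq> events" using indep unfolding indep_sets_def by blast
next
  fix J A assume J: "J \<subseteq> I" "J \<noteq> {}" "finite J" and A: "A \<in> Pi J (\<lambda>i. F (f i))"
  have inj_J: "inj_on f J" using inj J(1) by (rule inj_on_subset)
  define B where "B y = A (the_inv_into J f y)" for y
  have B_f: "B (f j) = A j" if "j \<in> J" for j
    using the_inv_into_f_f[OF inj_J that] by (simp add: B_def)
  have "B \<in> Pi (f ` J) F" using A B_f by auto
  then have "prob (\<Inter>y\<in>f ` J. B y) = (\<Prod>y\<in>f ` J. prob (B y))"
    using indep J unfolding indep_sets_def by (metis finite_imageI image_is_empty image_mono)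
  then show "prob (\<Inter>j\<in>J. A j) = (\<Prod>j\<in>J. prob (A j))"
    using B_f by (simp add: prod.reindex[OF inj_J])
qed

lemma (in prob_space) indep_vars_reindex:
  assumes "indep_vars M' X (f ` I)" "inj_on f I"
  shows "indep_vars (\<lambda>i. M' (f i)) (\<lambda>i. X (f i)) I"
  using assms indep_sets_reindex[of "\<lambda>y. {X y -` A \<inter> space M | A. A \<in> sets (M' y)}" f I]
  unfolding indep_vars_def2 by auto

lemma (in prob_space) indep_vars_sum_second_moment_le:
  fixes Z :: "'i \<Rightarrow> 'a \<Rightarrow> real"
  assumes indep: "indep_vars (\<lambda>_. borel) Z I" and J: "finite J" "J \<subseteq> I"
    and centered: "\<And>i. i \<in> I \<Longrightarrow> expectation (Z i) = 0"
    and bounded: "\<And>i w. i \<in> I \<Longrightarrow> w \<in> space M \<Longrightarrow> \<bar>Z i w\<bar> \<le> t i"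
  shows "expectation (\<lambda>w. (\<Sum>i\<in>J. Z i w)\<^sup>2) \<le> (\<Sum>i\<in>J. (t i)\<^sup>2)"
proof -
  have Z_meas[measurable]: "i \<in> I \<Longrightarrow> Z i \<in> borel_measurable M" for i
    using indep unfolding indep_vars_def by auto
  have Z_int: "integrable M (Z i)" if "i \<in> I" for i
    using that bounded by (intro integrable_const_bound[where B="t i"]) auto
  have prod_int: "integrable M (\<lambda>w. Z i w * Z j w)" if "i \<in> I" "j \<in> I" for i j
  proof (rule integrable_const_bound[where B="t i * t j"])
    show "AE w in M. norm (Z i w * Z j w) \<le> t i * t j"
      using that bounded by (auto simp: abs_mult intro!: mult_mono order.trans[OF abs_ge_zero])
  qed (use that in measurable)
  have cross: "expectation (\<lambda>w. Z i w * Z j w) = 0" if "i \<in> I" "j \<in> I" "i \<noteq> j" for i j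
  proof -
    have "indep_vars (\<lambda>_. borel) Z {i, j}"
      using that by (intro indep_vars_subset[OF indep]) auto
    then have "expectation (\<lambda>w. \<Prod>k\<in>{i, j}. Z k w) = (\<Prod>k\<in>{i, j}. expectation (Z k))"
      using that Z_int by (intro indep_vars_lebesgue_integral) auto
    then show ?thesis using that centered by simp
  qed
  have diag: "expectation (\<lambda>w. Z i w * Z i w) \<le> (t i)\<^sup>2" if "i \<in> I" for i
  proof -
    have "expectation (\<lambda>w. Z i w * Z i w) \<le> expectation (\<lambda>_. (t i)\<^sup>2)"
    proof (rule integral_mono)
      fix w assume "w \<in> space M"
      then have "\<bar>Z i w\<bar> * \<bar>Z i w\<bar> \<le> t i * t i"
        using that bounded by (intro mult_mono) (auto intro: order.trans[OF abs_ge_zero])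
      then show "Z i w * Z i w \<le> (t i)\<^sup>2" by (simp add: power2_eq_square)
    qed (use prod_int that in auto)
    then show ?thesis by (simp add: prob_space)
  qed
  have J_I: "i \<in> J \<Longrightarrow> i \<in> I" for i using J by auto
  have "expectation (\<lambda>w. (\<Sum>i\<in>J. Z i w)\<^sup>2) = expectation (\<lambda>w. \<Sum>i\<in>J. \<Sum>j\<in>J. Z i w * Z j w)"
    by (simp add: power2_eq_square sum_product)
  also have "\<dots> = (\<Sum>i\<in>J. \<Sum>j\<in>J. expectation (\<lambda>w. Z i w * Z j w))"
    using J_I prod_int by (simp add: Bochner_Integration.integral_sum Bochner_Integration.integrable_sum)
  also have "\<dots> = (\<Sum>i\<in>J. expectation (\<lambda>w. Z i w * Z i w))"
  proof (rule sum.cong[OF refl])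
    fix i assume "i \<in> J"
    then show "(\<Sum>j\<in>J. expectation (\<lambda>w. Z i w * Z j w)) = expectation (\<lambda>w. Z i w * Z i w)"
      using J J_I cross by (subst sum.remove[of J i]) (auto intro!: sum.neutral)
  qed
  also have "\<dots> \<le> (\<Sum>i\<in>J. (t i)\<^sup>2)"
    using J_I diag by (intro sum_mono) auto
  finally show ?thesis .
qed

lemma (in prob_space) centered_indicator_sum_second_moment:
  fixes Y :: "'i \<Rightarrow> 'a \<Rightarrow> real"
  assumes indep: "indep_vars (\<lambda>_. borel) Y I" and J: "finite J" "J \<subseteq> I"
    and A[measurable]: "A \<in> sets borel" and t: "\<And>i. 0 \<le> t i"
  shows "(\<integral>\<^sup>+w. ennreal ((\<Sum>i\<in>J. t i * (indicator A (Y i w) - prob (Y i -` A \<inter> space M)))\<^sup>2) \<partial>M)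
    \<le> ennreal (\<Sum>i\<in>J. (t i)\<^sup>2)"
proof -
  define Z where "Z i w = t i * (indicator A (Y i w) - prob (Y i -` A \<inter> space M))" for i w
  have Y_meas[measurable]: "i \<in> I \<Longrightarrow> Y i \<in> borel_measurable M" for i
    using indep unfolding indep_vars_def by auto
  have Z_meas: "i \<in> I \<Longrightarrow> Z i \<in> borel_measurable M" for i
    unfolding Z_def by measurable
  have Z_indep: "indep_vars (\<lambda>_. borel) Z I"
    unfolding Z_def by (rule indep_vars_compose2[OF indep]) measurable
  have Z_centered: "expectation (Z i) = 0" if "i \<in> I" for i
  proof -
    have "integrable M (\<lambda>w. indicator A (Y i w) :: real)"
      using that by (intro integrable_const_bound[where B=1]) auto
    moreover have "expectation (\<lambda>w. indicator A (Y i w) :: real) = prob (Y i -` A \<inter> space M)"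
      by (simp flip: indicator_vimage add: Int_commute)
    ultimately show ?thesis unfolding Z_def by (simp add: prob_space)
  qed
  have Z_bound: "\<bar>Z i w\<bar> \<le> t i" for i w
  proof -
    have "\<bar>indicator A (Y i w) - prob (Y i -` A \<inter> space M)\<bar> \<le> (1::real)"
      by (auto simp: indicator_def)
    then show ?thesis
      unfolding Z_def using t[of i] by (simp add: abs_mult mult_left_le)
  qed
  have "expectation (\<lambda>w. (\<Sum>i\<in>J. Z i w)\<^sup>2) \<le> (\<Sum>i\<in>J. (t i)\<^sup>2)"
    using Z_indep J Z_centered Z_bound by (rule indep_vars_sum_second_moment_le)
  moreover have "integrable M (\<lambda>w. (\<Sum>i\<in>J. Z i w)\<^sup>2)"
  proof (rule integrable_const_bound[where B="(\<Sum>i\<in>J. t i)\<^sup>2"])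
    have "\<bar>\<Sum>i\<in>J. Z i w\<bar> \<le> (\<Sum>i\<in>J. t i)" for w
      by (rule order.trans[OF sum_abs sum_mono[OF Z_bound]])
    then show "AE w in M. norm ((\<Sum>i\<in>J. Z i w)\<^sup>2) \<le> (\<Sum>i\<in>J. t i)\<^sup>2"
      using t by (intro AE_I2) (simp add: abs_le_square_iff[symmetric] sum_nonneg)
  qed (use J Z_meas in \<open>auto intro!: borel_measurable_power borel_measurable_sum\<close>)
  ultimately show ?thesis
    unfolding Z_def[symmetric] by (simp add: nn_integral_eq_integral ennreal_leI)
qed

lemma (in prob_space) indicator_series_deviation:
  fixes Y :: "nat \<Rightarrow> 'a \<Rightarrow> real" and t :: "nat \<Rightarrow> real"
  assumes indep: "indep_vars (\<lambda>_. borel) Y UNIV" and A[measurable]: "A \<in> sets borel"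
    and t: "\<And>i. 0 \<le> t i" and t2: "summable (\<lambda>i. (t i)\<^sup>2)"
    and mean: "summable (\<lambda>i. t i * prob (Y i -` A \<inter> space M))" and k: "0 < k"
  shows "emeasure M {w\<in>space M. (\<Sum>i. ennreal (t i * indicator A (Y i w))) \<noteq> \<infinity> \<and>
      k \<le> \<bar>enn2real (\<Sum>i. ennreal (t i * indicator A (Y i w)))
        - (\<Sum>i. t i * prob (Y i -` A \<inter> space M))\<bar>}
    \<le> ennreal ((\<Sum>i. (t i)\<^sup>2) / k\<^sup>2)"
proof -
  define p where "p i = prob (Y i -` A \<inter> space M)" for i
  define S where "S N w = (\<Sum>i<N. t i * (indicator A (Y i w) - p i))" for N w
  \<comment> \<open>By Fatou, the second-moment bound on the partial sums passes to their pointwise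
    liminf G; where the series converges, G is the squared deviation.\<close>
  define G where "G w = liminf (\<lambda>N. ennreal ((S N w)\<^sup>2))" for w
  have Y_meas[measurable]: "Y i \<in> borel_measurable M" for i
    using indep unfolding indep_vars_def by auto
  have G_meas[measurable]: "G \<in> borel_measurable M"
    unfolding G_def S_def by measurable
  have S_moment: "(\<integral>\<^sup>+w. ennreal ((S N w)\<^sup>2) \<partial>M) \<le> ennreal (\<Sum>i. (t i)\<^sup>2)" for N
  proof -
    have "(\<integral>\<^sup>+w. ennreal ((S N w)\<^sup>2) \<partial>M) \<le> ennreal (\<Sum>i<N. (t i)\<^sup>2)"
      unfolding S_def p_def by (rule centered_indicator_sum_second_moment[OF indep _ _ A t]) auto
    also have "\<dots> \<le> ennreal (\<Sum>i. (t i)\<^sup>2)"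
      using t2 by (intro ennreal_leI sum_le_suminf) auto
    finally show ?thesis .
  qed
  have G_integral: "(\<integral>\<^sup>+w. G w \<partial>M) \<le> ennreal (\<Sum>i. (t i)\<^sup>2)"
  proof -
    have "(\<integral>\<^sup>+w. G w \<partial>M) \<le> liminf (\<lambda>N. \<integral>\<^sup>+w. ennreal ((S N w)\<^sup>2) \<partial>M)"
      unfolding G_def by (intro nn_integral_liminf) (simp add: S_def)
    also have "\<dots> \<le> liminf (\<lambda>N. ennreal (\<Sum>i. (t i)\<^sup>2))"
      by (intro Liminf_mono) (simp add: S_moment)
    finally show ?thesis by (simp add: Liminf_const)
  qed
  have G_limit: "G w = ennreal (((\<Sum>i. t i * indicator A (Y i w)) - (\<Sum>i. t i * p i))\<^sup>2)"
    if "summable (\<lambda>i. t i * indicator A (Y i w))" for w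
  proof -
    have "(\<lambda>N. S N w) \<longlonglongrightarrow> (\<Sum>i. t i * indicator A (Y i w)) - (\<Sum>i. t i * p i)"
      unfolding S_def right_diff_distrib sum_subtractf
      using that mean unfolding p_def by (intro tendsto_diff summable_LIMSEQ)
    then have "(\<lambda>N. ennreal ((S N w)\<^sup>2)) \<longlonglongrightarrow> ennreal (((\<Sum>i. t i * indicator A (Y i w)) - (\<Sum>i. t i * p i))\<^sup>2)"
      by (intro tendsto_ennrealI tendsto_power)
    then show ?thesis
      unfolding G_def by (rule lim_imp_Liminf[rotated]) simp
  qed
  have B_sets: "{w\<in>space M. 1 \<le> c * G w} \<in> sets M" for c
    by (intro borel_measurable_le borel_measurable_times_ennreal borel_measurable_const G_meas)
  have "{w\<in>space M. (\<Sum>i. ennreal (t i * indicator A (Y i w))) \<noteq> \<infinity> \<and>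
      k \<le> \<bar>enn2real (\<Sum>i. ennreal (t i * indicator A (Y i w))) - (\<Sum>i. t i * p i)\<bar>}
    \<subseteq> {w\<in>space M. 1 \<le> ennreal (1 / k\<^sup>2) * G w}"
  proof safe
    fix w assume "w \<in> space M" and fin: "(\<Sum>i. ennreal (t i * indicator A (Y i w))) \<noteq> \<infinity>"
      and dev': "k \<le> \<bar>enn2real (\<Sum>i. ennreal (t i * indicator A (Y i w))) - (\<Sum>i. t i * p i)\<bar>"
    have terms_nonneg: "0 \<le> t i * indicator A (Y i w)" for i
      using t by simp
    have summ: "summable (\<lambda>i. t i * indicator A (Y i w))"
      by (rule summable_suminf_not_top) (use terms_nonneg fin in auto)
    then have "enn2real (\<Sum>i. ennreal (t i * indicator A (Y i w))) = (\<Sum>i. t i * indicator A (Y i w))"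
      using terms_nonneg by (simp add: suminf_ennreal2 suminf_nonneg)
    with dev' have dev: "k \<le> \<bar>(\<Sum>i. t i * indicator A (Y i w)) - (\<Sum>i. t i * p i)\<bar>"
      by simp
    define D where "D = (\<Sum>i. t i * indicator A (Y i w)) - (\<Sum>i. t i * p i)"
    have "k\<^sup>2 \<le> D\<^sup>2"
      using power_mono[OF dev, of 2] k unfolding D_def by simp
    then have "1 \<le> 1 / k\<^sup>2 * D\<^sup>2"
      using k by (simp add: field_simps)
    then have "ennreal 1 \<le> ennreal (1 / k\<^sup>2 * D\<^sup>2)"
      by (rule ennreal_leI)
    also have "ennreal (1 / k\<^sup>2 * D\<^sup>2) = ennreal (1 / k\<^sup>2) * G w"
      unfolding G_limit[OF summ] D_def[symmetric] by (rule ennreal_mult) simp_all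
    finally show "1 \<le> ennreal (1 / k\<^sup>2) * G w" by simp
  qed
  then have "emeasure M {w\<in>space M. (\<Sum>i. ennreal (t i * indicator A (Y i w))) \<noteq> \<infinity> \<and>
      k \<le> \<bar>enn2real (\<Sum>i. ennreal (t i * indicator A (Y i w))) - (\<Sum>i. t i * p i)\<bar>}
    \<le> emeasure M {w\<in>space M. 1 \<le> ennreal (1 / k\<^sup>2) * G w}"
    by (rule emeasure_mono[OF _ B_sets])
  also have "\<dots> \<le> ennreal (1 / k\<^sup>2) * (\<integral>\<^sup>+w. G w * indicator (space M) w \<partial>M)"
    by (intro nn_integral_Markov_inequality borel_measurable_times_ennreal G_meas
        borel_measurable_indicator sets.top)
  also have "(\<integral>\<^sup>+w. G w * indicator (space M) w \<partial>M) = (\<integral>\<^sup>+w. G w \<partial>M)"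
    by (rule nn_integral_cong) simp
  also have "ennreal (1 / k\<^sup>2) * (\<integral>\<^sup>+w. G w \<partial>M) \<le> ennreal (1 / k\<^sup>2) * ennreal (\<Sum>i. (t i)\<^sup>2)"
    using G_integral by (rule mult_left_mono) simp
  also have "\<dots> = ennreal ((\<Sum>i. (t i)\<^sup>2) / k\<^sup>2)"
    using t2 by (simp add: ennreal_mult[symmetric] suminf_nonneg)
  finally show ?thesis
    unfolding p_def .
qed

section \<open>The random measure with exponential atoms\<close>

lemma (in prob_space) exponential_distributed_prob_atLeastAtMost:
  assumes D: "distributed M lborel X (exponential_density l)" and l: "0 < l" and a: "0 \<le> a"
  shows "prob (X -` {0..a} \<inter> space M) = 1 - exp (- a * l)"
proof -
  have X_meas[measurable]: "X \<in> borel_measurable M"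
    using distributed_measurable[OF D] by simp
  have "\<P>(w in M. X w \<le> 0) = 0"
    using exponential_distributedD_le[OF D order_refl l] by simp
  moreover have "\<P>(w in M. X w < 0) \<le> \<P>(w in M. X w \<le> 0)"
    by (intro finite_measure_mono) auto
  ultimately have neg: "\<P>(w in M. X w < 0) = 0"
    by (simp add: antisym)
  have "X -` {0..a} \<inter> space M = {w\<in>space M. X w \<le> a} - {w\<in>space M. X w < 0}"
    by auto
  also have "prob \<dots> = \<P>(w in M. X w \<le> a) - \<P>(w in M. X w < 0)"
    using a by (intro finite_measure_Diff) auto
  finally have "prob (X -` {0..a} \<inter> space M) = \<P>(w in M. X w \<le> a) - \<P>(w in M. X w < 0)" .
  then show ?thesis
    using neg exponential_distributedD_le[OF D a l] by simp
qed

lemma rand_mu_mono: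
  "A \<subseteq> B \<Longrightarrow> B \<in> sets borel \<Longrightarrow> rand_mu \<theta> X w A \<le> rand_mu \<theta> X w B"
  unfolding rand_mu_def
  by (intro add_mono mult_left_mono emeasure_mono suminf_le summableI)
    (auto simp: indicator_def)

lemma rand_mu_atLeastAtMost:
  assumes "\<And>i. 0 \<le> \<theta> i" "0 \<le> l"
  shows "rand_mu \<theta> X w {0..l}
    = ennreal ((\<theta> 0)\<^sup>2 * l) + (\<Sum>i. ennreal (\<theta> (Suc i) * indicator {0..l} (X (Suc i) w)))"
proof -
  have "ennreal (\<theta> (Suc i) * indicator {0..l} (X (Suc i) w))
      = ennreal (\<theta> (Suc i)) * indicator {0..l} (X (Suc i) w)" for i
    by (simp add: indicator_def)
  then show ?thesis
    using assms unfolding rand_mu_def by (simp add: Int_absorb2 ennreal_mult)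
qed

locale exponential_atoms = prob_space M for M :: "'a measure" +
  fixes \<theta> :: "nat \<Rightarrow> real" and X :: "nat \<Rightarrow> 'a \<Rightarrow> real"
  assumes in_Omega: "in_Omega \<theta>"
    and indep: "indep_vars (\<lambda>_. borel) X {1..}"
    and exponential: "\<And>i. 1 \<le> i \<Longrightarrow> 0 < \<theta> i \<Longrightarrow> distributed M lborel (X i) (exponential_density (\<theta> i))"
begin

abbreviation mean :: "real \<Rightarrow> real" where
  "mean \<equiv> mean_mass ((\<theta> 0)\<^sup>2) (\<lambda>i. \<theta> (Suc i))"

lemma theta_nonneg: "0 \<le> \<theta> i"
  using in_Omega by (simp add: in_Omega_def)

lemma atom_weights_sums: "(\<lambda>i. (\<theta> (Suc i))\<^sup>2) sums (1 - (\<theta> 0)\<^sup>2)"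
  using in_Omega unfolding in_Omega_def by (subst sums_Suc_iff) simp

lemma atom_weights_summable: "summable (\<lambda>i. (\<theta> (Suc i))\<^sup>2)"
  using atom_weights_sums by (rule sums_summable)

lemma atom_weights_total: "(\<theta> 0)\<^sup>2 + (\<Sum>i. (\<theta> (Suc i))\<^sup>2) = 1"
  using atom_weights_sums by (simp add: sums_iff)

lemma X_measurable[measurable]: "X (Suc i) \<in> borel_measurable M"
  using indep unfolding indep_vars_def by auto

lemma atoms_indep: "indep_vars (\<lambda>_. borel) (\<lambda>i. X (Suc i)) UNIV"
proof -
  have "Suc ` UNIV = {1..}"
    by (auto simp: image_iff dest: Suc_le_D)
  then show ?thesis
    using indep_vars_reindex[of "\<lambda>_. borel" X Suc UNIV] indep by simp
qed

lemma atom_mean: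
  assumes "0 \<le> l"
  shows "\<theta> (Suc i) * prob (X (Suc i) -` {0..l} \<inter> space M) = exp_atom_mass (\<theta> (Suc i)) l"
proof (cases "\<theta> (Suc i) = 0")
  case False
  then have pos: "0 < \<theta> (Suc i)" using theta_nonneg[of "Suc i"] by simp
  then show ?thesis
    using exponential_distributed_prob_atLeastAtMost[OF exponential[OF _ pos] pos assms]
    by (simp add: exp_atom_mass_def mult.commute)
qed (simp add: exp_atom_mass_def)

lemma mono_on_mean: "mono_on {0..} mean"
  using mean_mass_increment(1)[OF theta_nonneg atom_weights_summable]
  by (intro mono_onI) simp

lemma mean_nonneg: "0 \<le> l \<Longrightarrow> 0 \<le> mean l"
  using mono_onD[OF mono_on_mean, of 0 l] by simp

lemma continuous_on_mean: "continuous_on {0..} mean"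
  by (intro continuous_on_mean_mass theta_nonneg atom_weights_summable zero_le_power2)

lemma filterlim_mean_at_top: "filterlim mean at_top at_top"
proof (rule filterlim_mean_mass_at_top[OF theta_nonneg atom_weights_summable zero_le_power2])
  show "(\<theta> 0)\<^sup>2 \<noteq> 0 \<or> \<not> summable (\<lambda>i. \<theta> (Suc i))"
    using in_Omega by (simp add: in_Omega_def)
qed

lemma expected_rand_mu:
  assumes l: "0 \<le> l"
  shows "(\<integral>\<^sup>+w. rand_mu \<theta> X w {0..l} \<partial>M) = ennreal (mean l)"
proof -
  have atom: "(\<integral>\<^sup>+w. ennreal (\<theta> (Suc i) * indicator {0..l} (X (Suc i) w)) \<partial>M)
      = ennreal (exp_atom_mass (\<theta> (Suc i)) l)" for i
  proof -
    have "(\<integral>\<^sup>+w. ennreal (\<theta> (Suc i) * indicator {0..l} (X (Suc i) w)) \<partial>M)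
        = ennreal (\<integral>w. \<theta> (Suc i) * indicator {0..l} (X (Suc i) w) \<partial>M)"
      by (intro nn_integral_eq_integral integrable_const_bound[where B="\<theta> (Suc i)"])
        (auto simp: indicator_def theta_nonneg)
    also have "(\<integral>w. \<theta> (Suc i) * indicator {0..l} (X (Suc i) w) \<partial>M)
        = \<theta> (Suc i) * prob (X (Suc i) -` {0..l} \<inter> space M)"
      by (simp flip: indicator_vimage add: Int_commute)
    finally show ?thesis using atom_mean[OF l] by simp
  qed
  have "(\<integral>\<^sup>+w. rand_mu \<theta> X w {0..l} \<partial>M)
      = ennreal ((\<theta> 0)\<^sup>2 * l) + (\<Sum>i. ennreal (exp_atom_mass (\<theta> (Suc i)) l))"
    using l theta_nonneg
    by (simp add: rand_mu_atLeastAtMost nn_integral_add nn_integral_suminf atom emeasure_space_1)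
  also have "\<dots> = ennreal (mean l)"
    using l theta_nonneg summable_exp_atom_mass[OF theta_nonneg atom_weights_summable l]
      exp_atom_mass_bounds(1)[OF theta_nonneg l]
    by (simp add: mean_mass_def suminf_ennreal2 suminf_nonneg)
  finally show ?thesis .
qed

lemma rand_mu_measurable[measurable]: "(\<lambda>w. rand_mu \<theta> X w {0..l}) \<in> borel_measurable M"
  unfolding rand_mu_def by measurable

lemma AE_rand_mu_finite: "0 \<le> l \<Longrightarrow> AE w in M. rand_mu \<theta> X w {0..l} \<noteq> \<infinity>"
  using nn_integral_PInf_AE[OF rand_mu_measurable] by (simp add: expected_rand_mu)

lemma rand_mu_deviation:
  assumes l: "0 \<le> l" and k: "0 < k"
  shows "emeasure M {w\<in>space M. rand_mu \<theta> X w {0..l} \<noteq> \<infinity> \<and>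
      k \<le> \<bar>enn2real (rand_mu \<theta> X w {0..l}) - mean l\<bar>} \<le> ennreal (1 / k\<^sup>2)"
proof -
  define R where "R w = (\<Sum>i. ennreal (\<theta> (Suc i) * indicator {0..l} (X (Suc i) w)))" for w
  define p where "p i = prob (X (Suc i) -` {0..l} \<inter> space M)" for i
  have mean_eq: "mean l = (\<theta> 0)\<^sup>2 * l + (\<Sum>i. \<theta> (Suc i) * p i)"
    using atom_mean[OF l] by (simp add: mean_mass_def p_def)
  have "{w\<in>space M. rand_mu \<theta> X w {0..l} \<noteq> \<infinity> \<and>
      k \<le> \<bar>enn2real (rand_mu \<theta> X w {0..l}) - mean l\<bar>}
    = {w\<in>space M. R w \<noteq> \<infinity> \<and> k \<le> \<bar>enn2real (R w) - (\<Sum>i. \<theta> (Suc i) * p i)\<bar>}"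
  proof -
    have "rand_mu \<theta> X w {0..l} = ennreal ((\<theta> 0)\<^sup>2 * l) + R w" for w
      unfolding R_def by (rule rand_mu_atLeastAtMost[OF theta_nonneg l])
    moreover have "enn2real (ennreal ((\<theta> 0)\<^sup>2 * l) + R w) = (\<theta> 0)\<^sup>2 * l + enn2real (R w)"
      if "R w \<noteq> \<infinity>" for w
      using that l by (simp add: enn2real_plus less_top)
    ultimately show ?thesis
      unfolding mean_eq by (auto simp: algebra_simps)
  qed
  also have "emeasure M \<dots> \<le> ennreal ((\<Sum>i. (\<theta> (Suc i))\<^sup>2) / k\<^sup>2)"
    unfolding R_def p_def
  proof (rule indicator_series_deviation[OF atoms_indep _ theta_nonneg atom_weights_summable _ k])
    show "summable (\<lambda>i. \<theta> (Suc i) * prob (X (Suc i) -` {0..l} \<inter> space M))"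
      using summable_exp_atom_mass[OF theta_nonneg atom_weights_summable l] by (simp add: atom_mean[OF l])
  qed simp
  also have "\<dots> \<le> ennreal (1 / k\<^sup>2)"
    using atom_weights_total zero_le_power2[of "\<theta> 0"]
    by (intro ennreal_leI divide_right_mono) (linarith, simp)
  finally show ?thesis .
qed

lemma AE_eventually_near_levels:
  assumes L_nonneg: "\<And>n. 0 \<le> L n" and mean_L: "\<And>n. mean (L n) = (real n)\<^sup>2"
  shows "AE w in M. eventually (\<lambda>n. \<bar>enn2real (rand_mu \<theta> X w {0..L n}) - (real n)\<^sup>2\<bar> < real n) sequentially"
proof -
  define B where "B n = {w\<in>space M. rand_mu \<theta> X w {0..L n} \<noteq> \<infinity> \<and>
      max 1 (real n) \<le> \<bar>enn2real (rand_mu \<theta> X w {0..L n}) - (real n)\<^sup>2\<bar>}" for n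
  have B_sets[measurable]: "B n \<in> sets M" for n
    unfolding B_def by measurable
  have B_le: "measure M (B n) \<le> 1 / (max 1 (real n))\<^sup>2" for n
    using rand_mu_deviation[OF L_nonneg, of "max 1 (real n)" n]
    by (simp add: B_def mean_L emeasure_eq_measure)
  have bound_summable: "summable (\<lambda>n. 1 / (max 1 (real n))\<^sup>2)"
  proof (rule summable_cong[THEN iffD1])
    show "eventually (\<lambda>n. inverse (real n ^ 2) = 1 / (max 1 (real n))\<^sup>2) sequentially"
      using eventually_ge_at_top[of "1::nat"] by eventually_elim (simp add: divide_inverse)
  qed (rule inverse_power_summable, simp)
  have "summable (\<lambda>n. measure M (B n))"
    by (rule summable_comparison_test'[OF bound_summable]) (simp add: B_le)
  then have "AE w in M. eventually (\<lambda>n. w \<in> space M - B n) sequentially"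
    by (rule borel_cantelli_AE1[OF B_sets, rotated]) (simp add: less_top[symmetric])
  moreover have "AE w in M. \<forall>n. rand_mu \<theta> X w {0..L n} \<noteq> \<infinity>"
    using AE_rand_mu_finite[OF L_nonneg] by (simp add: AE_all_countable)
  ultimately show ?thesis
  proof eventually_elim
    case (elim w)
    show ?case using elim(1) eventually_ge_at_top[of "1::nat"]
      by eventually_elim (use elim(2) in \<open>auto simp: B_def not_le\<close>)
  qed
qed

lemma mono_rand_mu_if_finite:
  assumes "\<And>n::nat. rand_mu \<theta> X w {0..real n} \<noteq> \<infinity>"
  shows "mono (\<lambda>l. enn2real (rand_mu \<theta> X w {0..l}))"
proof (rule monoI)
  fix a b :: real assume "a \<le> b"
  obtain n :: nat where "b \<le> real n" using real_arch_simple by blast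
  then have "rand_mu \<theta> X w {0..b} \<le> rand_mu \<theta> X w {0..real n}"
    by (intro rand_mu_mono) auto
  then have "rand_mu \<theta> X w {0..b} \<noteq> \<infinity>"
    using assms[of n] by (auto simp: top_unique)
  moreover have "rand_mu \<theta> X w {0..a} \<le> rand_mu \<theta> X w {0..b}"
    using \<open>a \<le> b\<close> by (intro rand_mu_mono) auto
  ultimately show "enn2real (rand_mu \<theta> X w {0..a}) \<le> enn2real (rand_mu \<theta> X w {0..b})"
    by (simp add: enn2real_mono top.not_eq_extremum)
qed

end

theorem mainTheorem8:
  fixes M :: "'a measure" and \<theta> :: "nat \<Rightarrow> real" and X :: "nat \<Rightarrow> 'a \<Rightarrow> real"
  assumes "prob_space M"
    and "in_Omega \<theta>"
    and "prob_space.indep_vars M (\<lambda>_. borel) X {1..}"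
    and "\<And>i. 1 \<le> i \<Longrightarrow> 0 < \<theta> i \<Longrightarrow> distributed M lborel (X i) (exponential_density (\<theta> i))"
  shows "AE w in M. (\<lambda>l. enn2real (rand_mu \<theta> X w {0..l}))
           \<sim>[at_top] (\<lambda>l. enn2real (\<integral>\<^sup>+ v. rand_mu \<theta> X v {0..l} \<partial>M))"
proof -
  interpret exponential_atoms M \<theta> X
    using assms by (intro exponential_atoms.intro exponential_atoms_axioms.intro)
  have "\<forall>n. \<exists>x\<ge>0. mean x = (real n)\<^sup>2"
    using continuous_on_attains_at_top[OF continuous_on_mean _ filterlim_mean_at_top] by simp
  then obtain L where L: "\<And>n. 0 \<le> L n" "\<And>n. mean (L n) = (real n)\<^sup>2"
    by metis
  have mean_eq: "eventually (\<lambda>l. mean l = enn2real (\<integral>\<^sup>+v. rand_mu \<theta> X v {0..l} \<partial>M)) at_top"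
    using eventually_ge_at_top[of 0] by eventually_elim (simp add: expected_rand_mu mean_nonneg)
  have "AE w in M. \<forall>n::nat. rand_mu \<theta> X w {0..real n} \<noteq> \<infinity>"
    using AE_rand_mu_finite by (simp add: AE_all_countable)
  with AE_eventually_near_levels[OF L] show ?thesis
  proof eventually_elim
    case (elim w)
    have "(\<lambda>l. enn2real (rand_mu \<theta> X w {0..l})) \<sim>[at_top] mean"
      using mono_rand_mu_if_finite[OF elim(2)[rule_format]] _ mono_on_mean filterlim_mean_at_top L
        tendsto_div_square_of_near[OF elim(1)]
      by (rule asymp_equiv_of_square_levels) simp
    then show ?case
      using asymp_equiv_refl_ev[OF mean_eq] by (rule asymp_equiv_trans)
  qed
qed

end
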